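(* Let $A$, $\Omega$ be finite nonempty sets. The set of environments $(u_S,u_R)\in[0,1]^{2|A||\Omega|}$ satisfying scant-indifferences has Lebesgue measure one.
   Context: $A=\{a_1,\dots,a_{|A|}\}$. An environment is a pair of functions $u_S,u_R:A\times\Omega\to[0,1]$, identified with a point of $[0,1]^{2|A||\Omega|}$. For $a\in A$ let $\mathbf u_S(a)=u_S(a,\cdot)\in\mathbb R^{|\Omega|}$ and $\mathbf u_R(a)=u_R(a,\cdot)\in\mathbb R^{|\Omega|}$. For each $i$, the expanded-indifference matrix $T^i$ has $|\Omega|$ columns and rows: $\mathbf u_S(a_j)-\mathbf u_S(a_i)$ for each $j\ne i$, then $\mathbf u_R(a_j)-\mathbf u_R(a_i)$ for each $j\ne i$, then the rows of the $|\Omega|\times|\Omega|$ identity matrix. A row-submatrix of $T^i$ is a matrix obtained by deleting some rows of $T^i$. The environment satisfies scant-indifferences if for each $i$, every row-submatrix of $T^i$ has full rank. *)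

theory Defs
  imports "HOL-Analysis.Analysis"
begin

text \<open>The action set A is a finite type 'a, the state space \<Omega> a finite type 'w
  (types are nonempty).
  Rows of the expanded-indifference matrix T^i are indexed by ('a + 'a) + 'w:
  Inl (Inl j) (j \<noteq> i) is the row u_S(a_j) - u_S(a_i),
  Inl (Inr j) (j \<noteq> i) is the row u_R(a_j) - u_R(a_i),
  Inr w is the w-th row of the identity matrix.\<close>

definition T_row :: "('a \<Rightarrow> 'w::finite \<Rightarrow> real) \<Rightarrow> ('a \<Rightarrow> 'w \<Rightarrow> real) \<Rightarrow> 'a
    \<Rightarrow> ('a + 'a) + 'w \<Rightarrow> real^'w" where
  "T_row uS uR i r = (case r of
      Inl (Inl j) \<Rightarrow> (\<chi> w. uS j w - uS i w)
    | Inl (Inr j) \<Rightarrow> (\<chi> w. uR j w - uR i w)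
    | Inr v \<Rightarrow> axis v 1)"

definition T_idx :: "'a \<Rightarrow> (('a + 'a) + 'w) set" where
  "T_idx i = {Inl (Inl j) | j. j \<noteq> i} \<union> {Inl (Inr j) | j. j \<noteq> i} \<union> range Inr"

text \<open>A row-submatrix is given by a set R of kept row indices; its rank is the dimension
  of the span of its rows; full rank means rank = min(#rows, #columns).\<close>

definition scant_indifferences :: "('a::finite \<Rightarrow> 'w::finite \<Rightarrow> real) \<Rightarrow> ('a \<Rightarrow> 'w \<Rightarrow> real) \<Rightarrow> bool" where
  "scant_indifferences uS uR \<longleftrightarrow>
     (\<forall>i. \<forall>R \<subseteq> T_idx i. dim (T_row uS uR i ` R) = min (card R) CARD('w))"

text \<open>An environment is a point of [0,1]^(2|A||\<Omega>|), coordinates indexed by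
  ('a \<times> 'w) + ('a \<times> 'w): Inl (a,w) gives u_S(a,w), Inr (a,w) gives u_R(a,w).\<close>

definition env_S :: "real^(('a::finite \<times> 'w::finite) + ('a \<times> 'w)) \<Rightarrow> 'a \<Rightarrow> 'w \<Rightarrow> real" where
  "env_S x a w = x $ Inl (a, w)"

definition env_R :: "real^(('a::finite \<times> 'w::finite) + ('a \<times> 'w)) \<Rightarrow> 'a \<Rightarrow> 'w \<Rightarrow> real" where
  "env_R x a w = x $ Inr (a, w)"

end

theory Submission
  imports Defs
begin

text \<open>If scant-indifferences fails, some difference rows \<open>Q\<close> of some \<open>T\<^sup>i\<close>, together with
  identity rows \<open>W\<close>, \<open>|Q| + |W| \<le> |\<Omega>|\<close>, are linearly dependent with a nonzero coefficient at
  some \<open>t \<in> Q\<close>. Read off the states outside \<open>W\<close>, this relation determines the \<open>|\<Omega>| - |W| \<ge> |Q|\<close>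
  coordinates of the row \<open>t\<close> as smooth functions of the other coordinates and of only
  \<open>|Q| - 1\<close> free coefficients. Storing the coefficients in all but one of the determined
  coordinates presents the bad set as a differentiable image of a hyperplane, hence as a
  null set; and there are only finitely many choices of \<open>(i, Q, W, t)\<close>.\<close>

lemma differentiable_on_vec_lambda:
  fixes h :: "'n::finite \<Rightarrow> 'a::real_normed_vector \<Rightarrow> real"
  assumes "\<And>k. h k differentiable_on S"
  shows "(\<lambda>y. \<chi> k. h k y) differentiable_on S"
proof -
  have "(\<lambda>y. \<chi> k. h k y) = (\<lambda>y. \<Sum>k\<in>UNIV. h k y *\<^sub>R axis k 1)"
    by (simp add: fun_eq_iff vec_eq_iff axis_def if_distrib cong: if_cong)
  then show ?thesis
    using assms by (auto simp: differentiable_on_def intro!: differentiable_sum differentiable_scaleR)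
qed

lemma negligible_coordinates_determined:
  fixes \<kappa> :: "'c \<Rightarrow> 'n::finite" and F :: "'c \<Rightarrow> ('d \<Rightarrow> real) \<Rightarrow> real^'n \<Rightarrow> real"
  assumes inj: "inj_on \<kappa> C" and "finite D" and fewer: "card D < card C"
    and depends: "\<And>v e e' x x'. v \<in> C \<Longrightarrow> (\<forall>d\<in>D. e d = e' d) \<Longrightarrow>
                    (\<forall>k. k \<notin> \<kappa> ` C \<longrightarrow> x $ k = x' $ k) \<Longrightarrow> F v e x = F v e' x'"
    and diff: "\<And>v \<psi>. v \<in> C \<Longrightarrow> (\<lambda>y. F v (\<lambda>d. y $ \<psi> d) y) differentiable_on UNIV"
  shows "negligible {x. \<exists>e. \<forall>v\<in>C. x $ \<kappa> v = F v e x}"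
proof -
  have "finite C" using fewer card.infinite by fastforce
  obtain v0 where v0: "v0 \<in> C" using fewer by fastforce
  have "card D \<le> card (C - {v0})" using fewer v0 \<open>finite C\<close> by simp
  then obtain \<phi> where \<phi>: "inj_on \<phi> D" "\<phi> ` D \<subseteq> C - {v0}"
    using card_le_inj \<open>finite D\<close> \<open>finite C\<close> by (metis finite_Diff)
  define g where "g y = (\<chi> k. if k \<in> \<kappa> ` C then F (inv_into C \<kappa> k) (\<lambda>d. y $ \<kappa> (\<phi> d)) y else y $ k)"
    for y :: "real^'n"
  have "negligible (g ` {y. y $ \<kappa> v0 = 0})"
  proof (rule negligible_differentiable_image_negligible)
    show "g differentiable_on {y. y $ \<kappa> v0 = 0}"
      unfolding g_def
    proof (rule differentiable_on_vec_lambda)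
      fix k
      show "(\<lambda>y. if k \<in> \<kappa> ` C then F (inv_into C \<kappa> k) (\<lambda>d. y $ \<kappa> (\<phi> d)) y else y $ k)
          differentiable_on {y. y $ \<kappa> v0 = 0}"
        by (cases "k \<in> \<kappa> ` C")
          (simp_all add: differentiable_on_subset[OF diff] inv_into_into
            bounded_linear_imp_differentiable_on bounded_linear_vec_nth)
    qed
  qed (simp_all add: negligible_standard_hyperplane_cart)
  moreover have "{x. \<exists>e. \<forall>v\<in>C. x $ \<kappa> v = F v e x} \<subseteq> g ` {y. y $ \<kappa> v0 = 0}"
  proof
    fix x assume "x \<in> {x. \<exists>e. \<forall>v\<in>C. x $ \<kappa> v = F v e x}"
    then obtain e where e: "\<And>v. v \<in> C \<Longrightarrow> x $ \<kappa> v = F v e x" by blast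
    \<comment> \<open>the free coefficients are stored in the coordinates \<open>\<kappa> (\<phi> d)\<close>\<close>
    define y where "y = (\<chi> k. if k \<in> \<kappa> ` C then
        (if inv_into C \<kappa> k \<in> \<phi> ` D then e (inv_into D \<phi> (inv_into C \<kappa> k)) else 0) else x $ k)"
    have y_stored: "y $ \<kappa> (\<phi> d) = e d" if "d \<in> D" for d
    proof -
      have "\<phi> d \<in> C" using that \<phi> by auto
      then have "\<kappa> (\<phi> d) \<in> \<kappa> ` C" "inv_into C \<kappa> (\<kappa> (\<phi> d)) = \<phi> d"
        using inj by auto
      then show ?thesis using that \<phi>(1) by (simp add: y_def)
    qed
    have y_off: "y $ k = x $ k" if "k \<notin> \<kappa> ` C" for k
      using that by (simp add: y_def)
    have "\<kappa> v0 \<in> \<kappa> ` C" "inv_into C \<kappa> (\<kappa> v0) = v0" "v0 \<notin> \<phi> ` D"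
      using v0 inj \<phi>(2) by auto
    then have "y $ \<kappa> v0 = 0" by (simp add: y_def)
    moreover have "g y = x"
      unfolding vec_eq_iff
    proof
      fix k
      show "g y $ k = x $ k"
      proof (cases "k \<in> \<kappa> ` C")
        case True
        then obtain v where "v \<in> C" "k = \<kappa> v" by blast
        then show ?thesis
          using inj y_stored y_off by (simp add: g_def e depends[of v _ e y x])
      qed (simp add: g_def y_off)
    qed
    ultimately show "x \<in> g ` {y. y $ \<kappa> v0 = 0}" by blast
  qed
  ultimately show ?thesis by (rule negligible_subset)
qed

lemma nontrivial_relation_if_dim_less_card:
  fixes f :: "'r \<Rightarrow> 'v::euclidean_space"
  assumes "finite R" "dim (f ` R) < card R"
  shows "\<exists>c. (\<exists>r\<in>R. c r \<noteq> 0) \<and> (\<Sum>r\<in>R. c r *\<^sub>R f r) = 0"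
proof (cases "inj_on f R")
  case True
  then have "card (f ` R) = card R" by (rule card_image)
  then have "dependent (f ` R)"
    using assms(2) dim_eq_card_independent[of "f ` R"] by auto
  then obtain u where "\<exists>v\<in>f ` R. u v \<noteq> 0" "(\<Sum>v\<in>f ` R. u v *\<^sub>R v) = 0"
    using dependent_finite[of "f ` R"] assms(1) by auto
  with True show ?thesis
    by (intro exI[of _ "u \<circ> f"]) (auto simp: sum.reindex)
next
  case False
  then obtain r1 r2 where r: "r1 \<in> R" "r2 \<in> R" "r1 \<noteq> r2" "f r1 = f r2"
    by (auto simp: inj_on_def)
  let ?c = "\<lambda>r. if r = r1 then 1 else if r = r2 then -1 else 0 :: real"
  have "(\<Sum>r\<in>R. ?c r *\<^sub>R f r) = (\<Sum>r\<in>R. (if r = r1 then f r else 0) - (if r = r2 then f r else 0))"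
    using r by (intro sum.cong) auto
  also have "\<dots> = 0"
    using r assms(1) by (simp add: sum_subtractf)
  finally show ?thesis using r by (intro exI[of _ ?c]) auto
qed

lemma nontrivial_relation_if_not_full_rank:
  fixes f :: "'r \<Rightarrow> real^'n"
  assumes "finite R" "dim (f ` R) \<noteq> min (card R) CARD('n)"
  shows "\<exists>R'\<subseteq>R. card R' \<le> CARD('n) \<and> (\<exists>c. (\<exists>r\<in>R'. c r \<noteq> 0) \<and> (\<Sum>r\<in>R'. c r *\<^sub>R f r) = 0)"
proof -
  have "dim (f ` R) \<le> card (f ` R)"
    using assms(1) by (simp add: dim_le_card')
  also have "\<dots> \<le> card R"
    using assms(1) by (rule card_image_le)
  finally have "dim (f ` R) < min (card R) CARD('n)"
    using assms(2) dim_subset_UNIV_cart[of "f ` R"] by linarith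
  moreover obtain R' where R': "R' \<subseteq> R" "card R' = min (card R) CARD('n)"
    using obtain_subset_with_card_n[of "min (card R) CARD('n)" R] by auto
  moreover have "dim (f ` R') \<le> dim (f ` R)"
    using R'(1) by (intro dim_subset image_mono)
  ultimately have "\<exists>c. (\<exists>r\<in>R'. c r \<noteq> 0) \<and> (\<Sum>r\<in>R'. c r *\<^sub>R f r) = 0"
    using assms(1) finite_subset by (intro nontrivial_relation_if_dim_less_card) auto
  with R' show ?thesis by (intro exI[of _ R']) auto
qed

text \<open>A difference row of \<open>T\<^sup>i\<close> is labelled by \<open>q :: 'a + 'a\<close>: \<open>Inl j\<close> for
  \<open>u\<^sub>S(a\<^sub>j) - u\<^sub>S(a\<^sub>i)\<close> and \<open>Inr j\<close> for \<open>u\<^sub>R(a\<^sub>j) - u\<^sub>R(a\<^sub>i)\<close>.\<close>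

definition env_index :: "'a + 'a \<Rightarrow> 'w \<Rightarrow> ('a \<times> 'w) + ('a \<times> 'w)" where
  "env_index q v = map_sum (\<lambda>j. (j, v)) (\<lambda>j. (j, v)) q"

definition with_action :: "'a \<Rightarrow> 'a + 'a \<Rightarrow> 'a + 'a" where
  "with_action i q = map_sum (\<lambda>_. i) (\<lambda>_. i) q"

definition action_of :: "'a + 'a \<Rightarrow> 'a" where
  "action_of q = case_sum id id q"

lemma env_index_eq_iff [simp]: "env_index q v = env_index q' v' \<longleftrightarrow> q = q' \<and> v = v'"
  by (cases q; cases q') (auto simp: env_index_def)

lemma action_of_with_action [simp]: "action_of (with_action i q) = i"
  by (cases q) (simp_all add: action_of_def with_action_def)

lemma T_row_Inl_nth:
  "T_row (env_S x) (env_R x) i (Inl q) $ v = x $ env_index q v - x $ env_index (with_action i q) v"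
  by (cases q) (simp_all add: T_row_def env_S_def env_R_def env_index_def with_action_def)

lemma sum_axis_nth: "(\<Sum>w\<in>W. a w *\<^sub>R axis w (1::real)) $ v = (if v \<in> W then a v else 0)"
  by (simp add: axis_def if_distrib sum.If_cases)

definition rows_dependent_modulo_axes ::
    "('a \<Rightarrow> 'w::finite \<Rightarrow> real) \<Rightarrow> ('a \<Rightarrow> 'w \<Rightarrow> real) \<Rightarrow> 'a \<Rightarrow> ('a + 'a) set \<Rightarrow> 'w set \<Rightarrow> 'a + 'a \<Rightarrow> bool"
  where
  "rows_dependent_modulo_axes uS uR i Q W t \<longleftrightarrow>
     (\<exists>c. c t \<noteq> 0 \<and> (\<forall>v. v \<notin> W \<longrightarrow> (\<Sum>q\<in>Q. c q *\<^sub>R T_row uS uR i (Inl q)) $ v = 0))"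

lemma rows_dependent_modulo_axes_if_not_scant_indifferences:
  fixes uS uR :: "'a::finite \<Rightarrow> 'w::finite \<Rightarrow> real"
  assumes "\<not> scant_indifferences uS uR"
  obtains i Q W t where "t \<in> Q" "\<forall>q\<in>Q. action_of q \<noteq> i" "card Q + card W \<le> CARD('w)"
    "rows_dependent_modulo_axes uS uR i Q W t"
proof -
  obtain i R where "R \<subseteq> T_idx i" "dim (T_row uS uR i ` R) \<noteq> min (card R) CARD('w)"
    using assms unfolding scant_indifferences_def by blast
  then obtain R' c where R': "R' \<subseteq> T_idx i" "card R' \<le> CARD('w)" and
    c: "\<exists>r\<in>R'. c r \<noteq> 0" "(\<Sum>r\<in>R'. c r *\<^sub>R T_row uS uR i r) = 0"
    using nontrivial_relation_if_not_full_rank[of R "T_row uS uR i"] by (meson finite order_trans)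
  define Q where "Q = Inl -` R'"
  define W where "W = Inr -` R'"
  have R'_eq: "R' = Inl ` Q \<union> Inr ` W"
    unfolding Q_def W_def by (auto simp: image_iff) (metis sum.exhaust)
  have "card R' = card Q + card W"
    unfolding R'_eq by (subst card_Un_disjoint) (auto simp: card_image)
  then have card_QW: "card Q + card W \<le> CARD('w)" using R'(2) by simp
  have Q_actions: "\<forall>q\<in>Q. action_of q \<noteq> i"
    using R'(1) by (auto simp: Q_def T_idx_def action_of_def)
  have split: "(\<Sum>r\<in>R'. c r *\<^sub>R T_row uS uR i r)
      = (\<Sum>q\<in>Q. c (Inl q) *\<^sub>R T_row uS uR i (Inl q)) + (\<Sum>w\<in>W. c (Inr w) *\<^sub>R axis w 1)"
    unfolding R'_eq by (subst sum.union_disjoint) (auto simp: sum.reindex T_row_def)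
  have comp: "(\<Sum>q\<in>Q. c (Inl q) *\<^sub>R T_row uS uR i (Inl q)) $ v + (if v \<in> W then c (Inr v) else 0) = 0"
    for v
  proof -
    have "((\<Sum>q\<in>Q. c (Inl q) *\<^sub>R T_row uS uR i (Inl q)) + (\<Sum>w\<in>W. c (Inr w) *\<^sub>R axis w 1)) $ v = 0"
      using c(2) by (simp only: split zero_index)
    then show ?thesis by (simp only: vector_add_component sum_axis_nth)
  qed
  obtain t where "t \<in> Q" and "c (Inl t) \<noteq> 0"
  proof -
    have "c (Inr w) = 0" if "w \<in> W" "\<forall>q\<in>Q. c (Inl q) = 0" for w
      using comp[of w] that by simp
    with c(1) that show ?thesis unfolding R'_eq by blast
  qed
  moreover have "rows_dependent_modulo_axes uS uR i Q W t"
    unfolding rows_dependent_modulo_axes_def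
  proof (intro exI[of _ "c \<circ> Inl"] conjI allI impI)
    fix v :: 'w assume "v \<notin> W"
    then show "(\<Sum>q\<in>Q. (c \<circ> Inl) q *\<^sub>R T_row uS uR i (Inl q)) $ v = 0"
      using comp[of v] by simp
  qed (simp add: \<open>c (Inl t) \<noteq> 0\<close>)
  ultimately show ?thesis using Q_actions card_QW that by blast
qed

lemma negligible_rows_dependent_modulo_axes:
  fixes i :: "'a::finite" and W :: "'w::finite set"
  assumes "t \<in> Q" and actions: "\<forall>q\<in>Q. action_of q \<noteq> i" and "card Q + card W \<le> CARD('w)"
  shows "negligible {x :: real^(('a \<times> 'w) + ('a \<times> 'w)).
           rows_dependent_modulo_axes (env_S x) (env_R x) i Q W t}"
proof -
  \<comment> \<open>the relation solved for row \<open>t\<close>, with coefficients \<open>e s = - c s / c t\<close>\<close>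
  define F where "F v e x = x $ env_index (with_action i t) v +
      (\<Sum>s\<in>Q - {t}. e s * (x $ env_index s v - x $ env_index (with_action i s) v))"
    for v :: 'w and e :: "'a + 'a \<Rightarrow> real" and x :: "real^(('a \<times> 'w) + ('a \<times> 'w))"
  have "negligible {x. \<exists>e. \<forall>v\<in>-W. x $ env_index t v = F v e x}"
  proof (rule negligible_coordinates_determined)
    show "inj_on (env_index t) (- W)" by (simp add: inj_on_def)
    show "card (Q - {t}) < card (- W)"
    proof -
      have "0 < card Q" using \<open>t \<in> Q\<close> by (auto simp: card_gt_0_iff)
      then show ?thesis using assms by (simp add: Compl_eq_Diff_UNIV card_Diff_subset)
    qed
    show "F v e x = F v e' x'"
      if "\<forall>d\<in>Q - {t}. e d = e' d" and "\<forall>k. k \<notin> env_index t ` (- W) \<longrightarrow> x $ k = x' $ k" for v e e' x x'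
    proof -
      have off: "x $ env_index q v = x' $ env_index q v" if "q \<noteq> t" for q
      proof -
        have "env_index q v \<notin> env_index t ` (- W)" using that by auto
        then show ?thesis using \<open>\<forall>k. k \<notin> env_index t ` (- W) \<longrightarrow> x $ k = x' $ k\<close> by blast
      qed
      have "with_action i q \<noteq> t" for q
        using actions \<open>t \<in> Q\<close> action_of_with_action by metis
      then show ?thesis
        unfolding F_def using off \<open>\<forall>d\<in>Q - {t}. e d = e' d\<close> by (intro arg_cong2[where f = "(+)"] sum.cong) auto
    qed
    show "(\<lambda>y. F v (\<lambda>d. y $ \<psi> d) y) differentiable_on UNIV" for v \<psi>
      unfolding F_def differentiable_on_def
      by (intro ballI differentiable_add differentiable_sum differentiable_mult differentiable_diff
          bounded_linear_imp_differentiable bounded_linear_vec_nth) simp_all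
  qed simp
  moreover have "{x. rows_dependent_modulo_axes (env_S x) (env_R x) i Q W t}
      \<subseteq> {x. \<exists>e. \<forall>v\<in>-W. x $ env_index t v = F v e x}"
  proof
    fix x assume "x \<in> {x. rows_dependent_modulo_axes (env_S x) (env_R x) i Q W t}"
    then obtain c where "c t \<noteq> 0" and
      c: "\<And>v. v \<notin> W \<Longrightarrow> (\<Sum>q\<in>Q. c q * (x $ env_index q v - x $ env_index (with_action i q) v)) = 0"
      by (auto simp: rows_dependent_modulo_axes_def T_row_Inl_nth)
    have "x $ env_index t v = F v (\<lambda>s. - c s / c t) x" if "v \<notin> W" for v
    proof -
      define \<delta> where "\<delta> q = x $ env_index q v - x $ env_index (with_action i q) v" for q
      have "c t * \<delta> t + (\<Sum>s\<in>Q - {t}. c s * \<delta> s) = 0"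
        using c[OF that] \<open>t \<in> Q\<close> by (simp add: \<delta>_def sum.remove)
      then have "(\<Sum>s\<in>Q - {t}. c s * \<delta> s) = - (c t * \<delta> t)" by linarith
      then have "(\<Sum>s\<in>Q - {t}. - c s / c t * \<delta> s) = \<delta> t"
        using \<open>c t \<noteq> 0\<close> by (simp add: sum_divide_distrib[symmetric] sum_negf)
      then show ?thesis by (simp add: F_def \<delta>_def)
    qed
    then show "x \<in> {x. \<exists>e. \<forall>v\<in>-W. x $ env_index t v = F v e x}" by auto
  qed
  ultimately show ?thesis by (rule negligible_subset)
qed

lemma negligible_not_scant_indifferences:
  "negligible {x :: real^(('a::finite \<times> 'w::finite) + ('a \<times> 'w)). \<not> scant_indifferences (env_S x) (env_R x)}"
proof (rule negligible_subset)
  let ?params = "{(i, Q, W, t). t \<in> Q \<and> (\<forall>q\<in>Q. action_of q \<noteq> (i::'a)) \<and> card Q + card W \<le> CARD('w)}"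
  let ?bad = "\<lambda>(i, Q, W, t). {x :: real^(('a \<times> 'w) + ('a \<times> 'w)).
    rows_dependent_modulo_axes (env_S x) (env_R x) i Q W t}"
  show "negligible (\<Union> (?bad ` ?params))"
  proof (rule negligible_Union)
    fix T assume "T \<in> ?bad ` ?params"
    then obtain i Q W t where "t \<in> Q" "\<forall>q\<in>Q. action_of q \<noteq> i" "card Q + card W \<le> CARD('w)"
      and "T = {x. rows_dependent_modulo_axes (env_S x) (env_R x) i Q W t}"
      by auto
    then show "negligible T" using negligible_rows_dependent_modulo_axes by blast
  qed simp
  show "{x. \<not> scant_indifferences (env_S x) (env_R x)} \<subseteq> \<Union> (?bad ` ?params)"
  proof
    fix x :: "real^(('a \<times> 'w) + ('a \<times> 'w))"
    assume "x \<in> {x. \<not> scant_indifferences (env_S x) (env_R x)}"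
    then have "\<not> scant_indifferences (env_S x) (env_R x)" by simp
    then obtain i Q W t where "t \<in> Q" "\<forall>q\<in>Q. action_of q \<noteq> i" "card Q + card W \<le> CARD('w)"
      and "rows_dependent_modulo_axes (env_S x) (env_R x) i Q W t"
      by (rule rows_dependent_modulo_axes_if_not_scant_indifferences)
    then show "x \<in> \<Union> (?bad ` ?params)" by (intro UN_I[of "(i, Q, W, t)"]) auto
  qed
qed

lemma emeasure_lebesgue_unit_cube_cart: "emeasure lebesgue (cbox 0 (1 :: real^'n)) = 1"
proof -
  have "\<forall>b\<in>Basis. (1 :: real^'n) \<bullet> b = 1"
    by (auto simp: Basis_vec_def inner_axis)
  then show ?thesis by (simp add: emeasure_lborel_cbox_eq)
qed

theorem lemma2:
  fixes dummy :: "'a::finite \<times> 'w::finite"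
  defines "E \<equiv> {x :: real^(('a \<times> 'w) + ('a \<times> 'w)).
                   x \<in> cbox 0 1 \<and> scant_indifferences (env_S x) (env_R x)}"
  shows "E \<in> sets lebesgue \<and> emeasure lebesgue E = 1"
proof -
  let ?N = "{x :: real^(('a \<times> 'w) + ('a \<times> 'w)). \<not> scant_indifferences (env_S x) (env_R x)}"
  have N: "?N \<in> null_sets lebesgue"
    using negligible_not_scant_indifferences negligible_iff_null_sets by blast
  have cube: "cbox 0 (1 :: real^(('a \<times> 'w) + ('a \<times> 'w))) \<in> sets lebesgue"
    by (simp add: fmeasurableD)
  have "E = cbox 0 1 - ?N" unfolding E_def by auto
  with N cube show ?thesis
    by (simp add: emeasure_Diff_null_set sets.Diff null_setsD2 emeasure_lebesgue_unit_cube_cart)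
qed

end
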